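(* Let $(Z, S(1), S(0), Y(1), Y(0), \mathbf{X})$ be random variables with $Z\in\{0,1\}$, $S(z)\in\{0,1\}$, $Y(z)$ real-valued, $\mathbf{X}$ a covariate vector, observed $S=S(Z)$, $Y=Y(Z)$, and assume Randomization: $Z \perp\!\!\!\perp \{S(1),S(0),Y(1),Y(0),\mathbf{X}\}$. Assume Monotonicity ($S(1)\ge S(0)$ a.s.) and General Principal Ignorability ($Y(z)\perp\!\!\!\perp U\mid \mathbf{X}$ for $z=0,1$). Then $$E\{\mathbf{X}Y(1)\mid U=s\bar{s}\} = E\{w_{1,s\bar{s}}(\mathbf{X})\mathbf{X}Y\mid Z=1,S=1\},$$ $$E\{\mathbf{X}Y(0)\mid U=s\bar{s}\} = E\{w_{0,s\bar{s}}(\mathbf{X})\mathbf{X}Y\mid Z=0,S=0\},$$ $$E(\mathbf{X}\mathbf{X}^\top\mid U=s\bar{s}) = E\{w_{1,s\bar{s}}(\mathbf{X})\mathbf{X}\mathbf{X}^\top\mid Z=1,S=1\} = E\{w_{0,s\bar{s}}(\mathbf{X})\mathbf{X}\mathbf{X}^\top\mid Z=0,S=0\},$$ where $w_{1,s\bar{s}}(\mathbf{X}) = \frac{e_{s\bar{s}}(\mathbf{X})}{e_{s\bar{s}}(\mathbf{X})+e_{ss}(\mathbf{X})}\Big/\frac{\pi_{s\bar{s}}}{\pi_{s\bar{s}}+\pi_{ss}}$ and $w_{0,s\bar{s}}(\mathbf{X}) = \frac{e_{s\bar{s}}(\mathbf{X})}{e_{s\bar{s}}(\mathbf{X})+e_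{\bar{s}\bar{s}}(\mathbf{X})}\Big/\frac{\pi_{s\bar{s}}}{\pi_{s\bar{s}}+\pi_{\bar{s}\bar{s}}}$.
   Context: The principal stratum is $U=(S(1),S(0))$, whose values $(1,1),(1,0),(0,1),(0,0)$ are labelled $ss, s\bar{s}, \bar{s}s, \bar{s}\bar{s}$. Principal scores: $e_u(\mathbf{X}) = \Pr(U=u\mid \mathbf{X})$; proportions $\pi_u=\Pr(U=u)$. All expectations are assumed to exist and all conditioning events and denominators to be positive. *)

theory Defs
  imports "HOL-Probability.Probability"
begin

definition sigmaX :: "'a measure \<Rightarrow> ('a \<Rightarrow> 'b::topological_space) \<Rightarrow> 'a measure" where
  "sigmaX M X = vimage_algebra (space M) X borel"

definition pscore :: "'a measure \<Rightarrow> ('a \<Rightarrow> 'b::topological_space) \<Rightarrow> ('a \<Rightarrow> 'u) \<Rightarrow> 'u \<Rightarrow> 'a \<Rightarrow> real" where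
  "pscore M X U u = real_cond_exp M (sigmaX M X) (indicator {\<omega> \<in> space M. U \<omega> = u})"

definition cond_indep_given ::
  "'a measure \<Rightarrow> ('a \<Rightarrow> real) \<Rightarrow> ('a \<Rightarrow> 'u) \<Rightarrow> ('a \<Rightarrow> 'b::topological_space) \<Rightarrow> bool" where
  "cond_indep_given M Y U X \<longleftrightarrow>
     (\<forall>A \<in> sets borel. \<forall>B. AE \<omega> in M.
        real_cond_exp M (sigmaX M X)
          (\<lambda>\<eta>. indicator {\<xi> \<in> space M. Y \<xi> \<in> A} \<eta> * indicator {\<xi> \<in> space M. U \<xi> \<in> B} \<eta>) \<omega>
        = real_cond_exp M (sigmaX M X) (indicator {\<xi> \<in> space M. Y \<xi> \<in> A}) \<omega>
          * real_cond_exp M (sigmaX M X) (indicator {\<xi> \<in> space M. U \<xi> \<in> B}) \<omega>)"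

definition cexp_event :: "'a measure \<Rightarrow> ('a \<Rightarrow> 'b::{banach, second_countable_topology}) \<Rightarrow> 'a set \<Rightarrow> 'b" where
  "cexp_event M f A = (1 / measure M A) *\<^sub>R (\<integral>\<omega>. indicator A \<omega> *\<^sub>R f \<omega> \<partial>M)"

definition outer :: "real ^ 'n \<Rightarrow> real ^ 'n ^ 'n" where
  "outer x = (\<chi> i j. x $ i * x $ j)"

definition indep_rv :: "'a measure \<Rightarrow> 'b measure \<Rightarrow> ('a \<Rightarrow> 'b) \<Rightarrow> 'c measure \<Rightarrow> ('a \<Rightarrow> 'c) \<Rightarrow> bool" where
  "indep_rv M Ma A Mb B \<longleftrightarrow>
     (\<forall>Sa \<in> sets Ma. \<forall>Sb \<in> sets Mb.
        measure M {\<omega> \<in> space M. A \<omega> \<in> Sa \<and> B \<omega> \<in> Sb}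
        = measure M {\<omega> \<in> space M. A \<omega> \<in> Sa} * measure M {\<omega> \<in> space M. B \<omega> \<in> Sb})"

end

theory Submission
  imports Defs
begin

text \<open>
  Randomization makes the treatment event \<open>{Z = z}\<close> independent of the \<sigma>-algebra generated by
  \<open>(S(1), S(0), Y(1), Y(0), X)\<close>, so restricting to \<open>Z = z\<close> only rescales integrals of
  functions of the potential outcomes. The event \<open>S(z) = z\<close> is a union of two principal
  strata, and principal ignorability allows the indicator of a stratum \<open>u\<close> to be replaced
  by its principal score \<open>e\<^sub>u(X)\<close> inside integrals of functions of \<open>(X, Y(z))\<close>.
  The weight turns the score of that union into the score of the target stratum, and its
  constant factor is exactly the ratio of the two normalising probabilities.
\<close>

lemma space_sigmaX [simp]: "space (sigmaX M X) = space M"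
  unfolding sigmaX_def by simp

lemma sets_sigmaX: "sets (sigmaX M X) = {X -` A \<inter> space M | A. A \<in> sets borel}"
  unfolding sigmaX_def by (rule sets_vimage_algebra2) simp

lemma measurable_sigmaX: "X \<in> borel_measurable (sigmaX M X)"
  unfolding sigmaX_def by (rule measurable_vimage_algebra1) simp

lemma subalgebra_sigmaX:
  assumes "X \<in> borel_measurable F" "space F = space M"
  shows "subalgebra F (sigmaX M X)"
  unfolding subalgebra_def sets_sigmaX using assms measurable_sets[OF assms(1)] by auto

lemma sigma_finite_subalgebra_sigmaX:
  assumes "prob_space M" "X \<in> borel_measurable M"
  shows "sigma_finite_subalgebra M (sigmaX M X)"
proof -
  interpret prob_space M by fact
  interpret finite_measure_subalgebra M "sigmaX M X"
    by unfold_locales (rule subalgebra_sigmaX[OF assms(2) refl])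
  show ?thesis by unfold_locales
qed

lemma integral_density_eq_on_generator:
  fixes H :: "'a \<Rightarrow> 'b::{banach, second_countable_topology}"
  assumes E: "Int_stable E" "E \<subseteq> sets M" "space M \<in> E"
    and f: "f \<in> borel_measurable M" "AE x in M. 0 \<le> f x"
    and g: "g \<in> borel_measurable M" "AE x in M. 0 \<le> g x"
    and fin: "emeasure (density M f) (space M) \<noteq> \<infinity>"
    and eq: "\<And>C. C \<in> E \<Longrightarrow> emeasure (density M f) C = emeasure (density M g) C"
    and H: "H \<in> borel_measurable (sigma (space M) E)"
  shows "(\<integral>x. f x *\<^sub>R H x \<partial>M) = (\<integral>x. g x *\<^sub>R H x \<partial>M)"
proof -
  let ?F = "sigma (space M) E"
  have E_Pow: "E \<subseteq> Pow (space M)"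
    using E(2) sets.sets_into_space by auto
  have sets_F: "sets ?F = sigma_sets (space M) E"
    using E_Pow by (rule sets_measure_of)
  have sub: "subalgebra (density M h) ?F" for h
    using sets.sigma_sets_subset[OF E(2)] E_Pow by (simp add: subalgebra_def sets_F)
  have E_F: "C \<in> sets ?F" if "C \<in> E" for C
    using that by (simp add: sets_F sigma_sets.Basic)
  have "restr_to_subalg (density M f) ?F = restr_to_subalg (density M g) ?F"
  proof (rule measure_eqI_generator_eq[OF E(1) E_Pow, where A="\<lambda>_. space M"])
    show "emeasure (restr_to_subalg (density M f) ?F) C = emeasure (restr_to_subalg (density M g) ?F) C"
      if "C \<in> E" for C
      using eq[OF that] E_F[OF that] by (simp add: emeasure_restr_to_subalg[OF sub])
    show "emeasure (restr_to_subalg (density M f) ?F) (space M) \<noteq> \<infinity>"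
      using fin E_F[OF E(3)] by (simp add: emeasure_restr_to_subalg[OF sub])
  qed (use E(3) in \<open>simp_all add: sets_restr_to_subalg[OF sub] sets_F\<close>)
  moreover have HM: "H \<in> borel_measurable M"
    using measurable_from_subalg[OF sub H] by simp
  ultimately have "integral\<^sup>L (density M f) H = integral\<^sup>L (density M g) H"
    using integral_subalgebra2[OF sub H] by metis
  then show ?thesis
    by (simp add: integral_density[OF HM f] integral_density[OF HM g])
qed

lemma integral_indicator_indep_subalgebra:
  fixes H :: "'a \<Rightarrow> 'b::{banach, second_countable_topology}"
  assumes "prob_space M" and sub: "subalgebra M F" and A: "A \<in> sets M"
    and indep: "\<And>C. C \<in> sets F \<Longrightarrow> measure M (A \<inter> C) = measure M A * measure M C"
    and H: "H \<in> borel_measurable F"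
  shows "(\<integral>\<omega>. indicator A \<omega> *\<^sub>R H \<omega> \<partial>M) = measure M A *\<^sub>R (\<integral>\<omega>. H \<omega> \<partial>M)"
proof -
  interpret prob_space M by fact
  have F_M: "sets F \<subseteq> sets M" and space_F: "space F = space M"
    using sub by (auto simp: subalgebra_def)
  have "sets (sigma (space M) (sets F)) = sets F"
    using sets.sigma_sets_eq[of F] sets.space_closed[of F] by (simp add: space_F)
  then have H': "H \<in> borel_measurable (sigma (space M) (sets F))"
    using H by (simp cong: measurable_cong_sets)
  have "(\<integral>\<omega>. indicator A \<omega> *\<^sub>R H \<omega> \<partial>M) = (\<integral>\<omega>. measure M A *\<^sub>R H \<omega> \<partial>M)"
  proof (rule integral_density_eq_on_generator[OF _ F_M _ _ _ _ _ _ _ H'])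
    show "emeasure (density M (\<lambda>\<omega>. ennreal (indicator A \<omega>))) C
        = emeasure (density M (\<lambda>_. ennreal (measure M A))) C"
      if "C \<in> sets F" for C
    proof -
      have "C \<in> sets M"
        using that F_M by auto
      then show ?thesis
        using A indep[OF that]
        by (simp add: ennreal_indicator emeasure_restricted emeasure_density_const emeasure_eq_measure ennreal_mult)
    qed
  qed (use A sets.top[of F] space_F in \<open>auto simp: Int_stable_def ennreal_indicator emeasure_restricted\<close>)
  then show ?thesis
    by simp
qed

definition XY_rectangles ::
    "'a measure \<Rightarrow> ('a \<Rightarrow> 'b::topological_space) \<Rightarrow> ('a \<Rightarrow> 'c::topological_space) \<Rightarrow> 'a set set"
  where
  "XY_rectangles M X Y = {D \<inter> {\<omega> \<in> space M. Y \<omega> \<in> A} | D A. D \<in> sets (sigmaX M X) \<and> A \<in> sets borel}"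

definition sigmaXY ::
    "'a measure \<Rightarrow> ('a \<Rightarrow> 'b::topological_space) \<Rightarrow> ('a \<Rightarrow> 'c::topological_space) \<Rightarrow> 'a measure"
  where
  "sigmaXY M X Y = sigma (space M) (XY_rectangles M X Y)"

lemma XY_rectangles_Pow: "XY_rectangles M X Y \<subseteq> Pow (space M)"
  unfolding XY_rectangles_def by auto

lemma space_sigmaXY [simp]: "space (sigmaXY M X Y) = space M"
  unfolding sigmaXY_def using XY_rectangles_Pow by (rule space_measure_of)

lemma sets_sigmaXY: "sets (sigmaXY M X Y) = sigma_sets (space M) (XY_rectangles M X Y)"
  unfolding sigmaXY_def using XY_rectangles_Pow by (rule sets_measure_of)

lemma XY_rectangles_Int_stable: "Int_stable (XY_rectangles M X Y)"
proof (rule Int_stableI)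
  fix C C' assume "C \<in> XY_rectangles M X Y" "C' \<in> XY_rectangles M X Y"
  then obtain D A D' A' where
    "C = D \<inter> {\<omega> \<in> space M. Y \<omega> \<in> A}" "C' = D' \<inter> {\<omega> \<in> space M. Y \<omega> \<in> A'}"
    "D \<in> sets (sigmaX M X)" "D' \<in> sets (sigmaX M X)" "A \<in> sets borel" "A' \<in> sets borel"
    unfolding XY_rectangles_def by blast
  then have "C \<inter> C' = (D \<inter> D') \<inter> {\<omega> \<in> space M. Y \<omega> \<in> A \<inter> A'}"
    and "D \<inter> D' \<in> sets (sigmaX M X)" "A \<inter> A' \<in> sets borel"
    by auto
  then show "C \<inter> C' \<in> XY_rectangles M X Y"
    unfolding XY_rectangles_def by blast
qed

lemma XY_rectangle:
  "D \<in> sets (sigmaX M X) \<Longrightarrow> A \<in> sets borel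
    \<Longrightarrow> D \<inter> {\<omega> \<in> space M. Y \<omega> \<in> A} \<in> XY_rectangles M X Y"
  unfolding XY_rectangles_def by blast

lemma space_in_XY_rectangles: "space M \<in> XY_rectangles M X Y"
  using XY_rectangle[OF sets.top[of "sigmaX M X"], of UNIV Y] by simp

lemma XY_rectangles_subset_sets:
  assumes "X \<in> borel_measurable M" "Y \<in> borel_measurable M"
  shows "XY_rectangles M X Y \<subseteq> sets M"
  using subalgebra_sigmaX[OF assms(1) refl] measurable_sets_Collect[OF assms(2)]
  by (auto simp: XY_rectangles_def subalgebra_def)

lemma measurable_sigmaXY_sigmaX:
  assumes "f \<in> measurable (sigmaX M X) N"
  shows "f \<in> measurable (sigmaXY M X Y) N"
proof (rule measurable_from_subalg[OF _ assms])
  have "D \<in> XY_rectangles M X Y" if "D \<in> sets (sigmaX M X)" for D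
    using XY_rectangle[OF that, of UNIV Y] sets.sets_into_space[OF that] by (simp add: Int_absorb2)
  then show "subalgebra (sigmaXY M X Y) (sigmaX M X)"
    unfolding subalgebra_def sets_sigmaXY by (auto intro: sigma_sets.Basic)
qed

lemma measurable_sigmaXY_X: "X \<in> borel_measurable (sigmaXY M X Y)"
  by (rule measurable_sigmaXY_sigmaX[OF measurable_sigmaX])

lemma measurable_sigmaXY_Y: "Y \<in> borel_measurable (sigmaXY M X Y)"
proof (rule measurableI)
  fix A :: "'b set" assume "A \<in> sets borel"
  then have "space M \<inter> {\<omega> \<in> space M. Y \<omega> \<in> A} \<in> XY_rectangles M X Y"
    using sets.top[of "sigmaX M X"] by (intro XY_rectangle) simp_all
  moreover have "Y -` A \<inter> space (sigmaXY M X Y) = space M \<inter> {\<omega> \<in> space M. Y \<omega> \<in> A}"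
    by auto
  ultimately show "Y -` A \<inter> space (sigmaXY M X Y) \<in> sets (sigmaXY M X Y)"
    unfolding sets_sigmaXY by (simp add: sigma_sets.Basic)
qed simp

lemma cond_indep_given_rectangle:
  assumes P: "prob_space M" and X: "X \<in> borel_measurable M" and Y: "Y \<in> borel_measurable M"
    and ci: "cond_indep_given M Y U X"
    and B: "{\<omega> \<in> space M. U \<omega> \<in> B} \<in> sets M"
    and D: "D \<in> sets (sigmaX M X)" and A: "A \<in> sets borel"
  shows "measure M ({\<omega> \<in> space M. U \<omega> \<in> B} \<inter> (D \<inter> {\<omega> \<in> space M. Y \<omega> \<in> A}))
    = (\<integral>\<omega>. real_cond_exp M (sigmaX M X) (indicator {\<omega> \<in> space M. U \<omega> \<in> B}) \<omega>
            * indicator (D \<inter> {\<omega> \<in> space M. Y \<omega> \<in> A}) \<omega> \<partial>M)"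
proof -
  interpret prob_space M by fact
  interpret sigma_finite_subalgebra M "sigmaX M X"
    by (rule sigma_finite_subalgebra_sigmaX[OF P X])
  let ?B = "{\<omega> \<in> space M. U \<omega> \<in> B}" and ?A = "{\<omega> \<in> space M. Y \<omega> \<in> A}"
  let ?e = "\<lambda>S. real_cond_exp M (sigmaX M X) (indicator S)"
  have A_M: "?A \<in> sets M"
    by (rule measurable_sets_Collect[OF Y]) (use A in simp)
  have D_M: "D \<in> sets M"
    using D subalg by (auto simp: subalgebra_def)
  have D_F: "(indicator D :: 'a \<Rightarrow> real) \<in> borel_measurable (sigmaX M X)"
    using D by simp
  have e_B_int: "integrable M (?e ?B)"
    by (intro real_cond_exp_int(1) integrable_const_bound[where B=1]) (use B in auto)
  have factor: "AE \<omega> in M. real_cond_exp M (sigmaX M X) (\<lambda>\<eta>. indicator ?A \<eta> * indicator ?B \<eta>) \<omega>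
      = ?e ?A \<omega> * ?e ?B \<omega>"
    using ci A unfolding cond_indep_given_def by blast
  have "measure M (?B \<inter> (D \<inter> ?A)) = (\<integral>\<omega>. indicator D \<omega> * (indicator ?A \<omega> * indicator ?B \<omega>) \<partial>M)"
    using B D_M A_M by (simp add: indicator_inter_arith[symmetric] ac_simps)
  also have "\<dots> = (\<integral>\<omega>. indicator D \<omega> * real_cond_exp M (sigmaX M X) (\<lambda>\<eta>. indicator ?A \<eta> * indicator ?B \<eta>) \<omega> \<partial>M)"
    by (rule real_cond_exp_intg(2)[symmetric])
       (use D_F B A_M D_M in \<open>auto intro!: integrable_const_bound[where B=1] split: split_indicator\<close>)
  also have "\<dots> = (\<integral>\<omega>. (indicator D \<omega> * ?e ?B \<omega>) * ?e ?A \<omega> \<partial>M)"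
    by (rule integral_cong_AE) (use factor D_F D_M in auto)
  also have "\<dots> = (\<integral>\<omega>. (indicator D \<omega> * ?e ?B \<omega>) * indicator ?A \<omega> \<partial>M)"
  proof (rule real_cond_exp_intg(2))
    show "integrable M (\<lambda>\<omega>. indicator D \<omega> * ?e ?B \<omega> * indicator ?A \<omega>)"
      by (rule Bochner_Integration.integrable_bound[OF e_B_int])
         (use D_M A_M in \<open>auto split: split_indicator\<close>)
  qed (use D_F A_M in auto)
  also have "\<dots> = (\<integral>\<omega>. ?e ?B \<omega> * indicator (D \<inter> ?A) \<omega> \<partial>M)"
    by (rule Bochner_Integration.integral_cong) (auto split: split_indicator)
  finally show ?thesis .
qed

lemma integral_indicator_cond_indep:
  fixes H :: "'a \<Rightarrow> 'b::{banach, second_countable_topology}"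
  assumes P: "prob_space M" and X: "X \<in> borel_measurable M" and Y: "Y \<in> borel_measurable M"
    and ci: "cond_indep_given M Y U X"
    and B: "{\<omega> \<in> space M. U \<omega> \<in> B} \<in> sets M"
    and H: "H \<in> borel_measurable (sigmaXY M X Y)"
  shows "(\<integral>\<omega>. indicator {\<omega> \<in> space M. U \<omega> \<in> B} \<omega> *\<^sub>R H \<omega> \<partial>M)
    = (\<integral>\<omega>. real_cond_exp M (sigmaX M X) (indicator {\<omega> \<in> space M. U \<omega> \<in> B}) \<omega> *\<^sub>R H \<omega> \<partial>M)"
proof -
  interpret prob_space M by fact
  interpret sigma_finite_subalgebra M "sigmaX M X"
    by (rule sigma_finite_subalgebra_sigmaX[OF P X])
  let ?B = "{\<omega> \<in> space M. U \<omega> \<in> B}"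
  let ?e = "real_cond_exp M (sigmaX M X) (indicator ?B)"
  have e_int: "integrable M ?e"
    by (intro real_cond_exp_int(1) integrable_const_bound[where B=1]) (use B in auto)
  have e_nonneg: "AE \<omega> in M. 0 \<le> ?e \<omega>"
    by (rule real_cond_exp_pos) (use B in auto)
  show ?thesis
  proof (rule integral_density_eq_on_generator[OF XY_rectangles_Int_stable
        XY_rectangles_subset_sets[OF X Y] space_in_XY_rectangles _ _ _ _ _ _ H[unfolded sigmaXY_def]])
    fix C assume C: "C \<in> XY_rectangles M X Y"
    then obtain D A where DA: "C = D \<inter> {\<omega> \<in> space M. Y \<omega> \<in> A}" "D \<in> sets (sigmaX M X)" "A \<in> sets borel"
      unfolding XY_rectangles_def by blast
    have C_M: "C \<in> sets M"
      using C XY_rectangles_subset_sets[OF X Y] by blast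
    have "emeasure (density M (\<lambda>\<omega>. ennreal (?e \<omega>))) C = (\<integral>\<^sup>+\<omega>. ennreal (?e \<omega> * indicator C \<omega>) \<partial>M)"
      using C_M by (auto simp: emeasure_density intro!: nn_integral_cong split: split_indicator)
    also have "\<dots> = ennreal (\<integral>\<omega>. ?e \<omega> * indicator C \<omega> \<partial>M)"
      by (rule nn_integral_eq_integral)
         (use e_int e_nonneg C_M in \<open>auto intro: integrable_real_mult_indicator split: split_indicator\<close>)
    also have "\<dots> = emeasure M (?B \<inter> C)"
      using cond_indep_given_rectangle[OF P X Y ci B DA(2,3)] DA(1) by (simp add: emeasure_eq_measure)
    finally show "emeasure (density M (\<lambda>\<omega>. ennreal (indicator ?B \<omega>))) C
        = emeasure (density M (\<lambda>\<omega>. ennreal (?e \<omega>))) C"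
      using B C_M by (simp add: ennreal_indicator emeasure_restricted)
  qed (use B e_nonneg in \<open>auto simp: ennreal_indicator emeasure_restricted\<close>)
qed

lemma cond_exp_stratum_union_weight:
  fixes M :: "'a measure" and X :: "'a \<Rightarrow> 'c::topological_space" and U :: "'a \<Rightarrow> 'u"
    and u v :: 'u
  defines "Ev a \<equiv> {\<omega> \<in> space M. U \<omega> = a}"
  defines "w \<equiv> \<lambda>\<omega>. (pscore M X U u \<omega> / (pscore M X U u \<omega> + pscore M X U v \<omega>))
                    / (measure M (Ev u) / (measure M (Ev u) + measure M (Ev v)))"
  assumes P: "prob_space M" and X: "X \<in> borel_measurable M"
    and Ev_M: "\<And>a. Ev a \<in> sets M" and uv: "u \<noteq> v"
    and pos_u: "measure M (Ev u) > 0"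
    and pos_den: "AE \<omega> in M. pscore M X U u \<omega> + pscore M X U v \<omega> > 0"
  shows "AE \<omega> in M. real_cond_exp M (sigmaX M X) (indicator (Ev u \<union> Ev v)) \<omega> * w \<omega>
    = ((measure M (Ev u) + measure M (Ev v)) / measure M (Ev u)) * pscore M X U u \<omega>"
proof -
  interpret prob_space M by fact
  interpret sigma_finite_subalgebra M "sigmaX M X"
    by (rule sigma_finite_subalgebra_sigmaX[OF P X])
  let ?\<pi> = "\<lambda>a. measure M (Ev a)"
  have pscore_eq: "pscore M X U a = real_cond_exp M (sigmaX M X) (indicator (Ev a))" for a
    unfolding pscore_def Ev_def ..
  have "indicator (Ev u \<union> Ev v) = (\<lambda>\<omega>. indicator (Ev u) \<omega> + indicator (Ev v) \<omega> :: real)"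
    using uv unfolding Ev_def by (auto simp: fun_eq_iff split: split_indicator)
  then have "AE \<omega> in M. real_cond_exp M (sigmaX M X) (indicator (Ev u \<union> Ev v)) \<omega>
      = pscore M X U u \<omega> + pscore M X U v \<omega>"
    unfolding pscore_eq
    by (auto intro!: real_cond_exp_add integrable_const_bound[where B=1] borel_measurable_indicator Ev_M)
  then show ?thesis
    using pos_den
  proof eventually_elim
    case (elim \<omega>)
    have "pscore M X U u \<omega> + pscore M X U v \<omega> \<noteq> 0" "?\<pi> u \<noteq> 0" "?\<pi> u + ?\<pi> v \<noteq> 0"
      using elim(2) pos_u measure_nonneg[of M "Ev v"] by linarith+
    moreover have "s * ((a / s) / (p / (p + q))) = ((p + q) / p) * a"
      if "s \<noteq> 0" "p \<noteq> 0" "p + q \<noteq> 0" for s a p q :: real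
      using that by (simp add: field_simps)
    ultimately show ?case
      unfolding elim(1) w_def by blast
  qed
qed

lemma cexp_event_principal_weighting:
  fixes M :: "'a measure" and G :: "'a \<Rightarrow> 'b::{banach, second_countable_topology}"
    and X :: "'a \<Rightarrow> 'c::topological_space" and U :: "'a \<Rightarrow> 'u" and u v :: 'u
  defines "Ev a \<equiv> {\<omega> \<in> space M. U \<omega> = a}"
  defines "w \<equiv> \<lambda>\<omega>. (pscore M X U u \<omega> / (pscore M X U u \<omega> + pscore M X U v \<omega>))
                    / (measure M (Ev u) / (measure M (Ev u) + measure M (Ev v)))"
  assumes P: "prob_space M" and sub: "subalgebra M F"
    and X: "X \<in> borel_measurable F" and Y: "Y \<in> borel_measurable M"
    and ci: "cond_indep_given M Y U X"
    and Ev_F: "\<And>a. Ev a \<in> sets F"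
    and A: "A \<in> sets M"
    and indep: "\<And>C. C \<in> sets F \<Longrightarrow> measure M (A \<inter> C) = measure M A * measure M C"
    and G_F: "G \<in> borel_measurable F" and G_XY: "G \<in> borel_measurable (sigmaXY M X Y)"
    and uv: "u \<noteq> v"
    and pos_u: "measure M (Ev u) > 0"
    and pos_A: "measure M (A \<inter> (Ev u \<union> Ev v)) > 0"
    and pos_den: "AE \<omega> in M. pscore M X U u \<omega> + pscore M X U v \<omega> > 0"
  shows "cexp_event M G (Ev u) = cexp_event M (\<lambda>\<omega>. w \<omega> *\<^sub>R G \<omega>) (A \<inter> (Ev u \<union> Ev v))"
proof -
  interpret prob_space M by fact
  have space_F: "space F = space M" and F_M: "sets F \<subseteq> sets M"
    using sub by (auto simp: subalgebra_def)
  have X_M: "X \<in> borel_measurable M"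
    by (rule measurable_from_subalg[OF sub X])
  let ?ce = "\<lambda>S. real_cond_exp M (sigmaX M X) (indicator S)"
  let ?\<pi> = "\<lambda>a. measure M (Ev a)"
  define E where "E = Ev u \<union> Ev v"
  have Ev_M: "Ev a \<in> sets M" for a
    using Ev_F F_M by blast
  have E_F: "E \<in> sets F"
    unfolding E_def using Ev_F by blast
  have Ev_U: "Ev a = {\<omega> \<in> space M. U \<omega> \<in> {a}}" for a
    unfolding Ev_def by auto
  have E_U: "E = {\<omega> \<in> space M. U \<omega> \<in> {u, v}}"
    unfolding E_def Ev_def by auto
  have disjoint: "Ev u \<inter> Ev v = {}"
    using uv unfolding Ev_def by auto
  have pscore_eq: "pscore M X U a = ?ce (Ev a)" for a
    unfolding pscore_def Ev_def ..
  have w_X: "w \<in> borel_measurable (sigmaX M X)"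
    unfolding w_def pscore_eq by measurable
  have w_F: "w \<in> borel_measurable F"
    by (rule measurable_from_subalg[OF subalgebra_sigmaX[OF X space_F] w_X])
  have w_XY: "w \<in> borel_measurable (sigmaXY M X Y)"
    by (rule measurable_sigmaXY_sigmaX[OF w_X])
  have w_M: "w \<in> borel_measurable M" and G_M: "G \<in> borel_measurable M"
    using measurable_from_subalg[OF sub] w_F G_F by blast+
  have wG_F: "(\<lambda>\<omega>. indicator E \<omega> *\<^sub>R (w \<omega> *\<^sub>R G \<omega>)) \<in> borel_measurable F"
    by (intro borel_measurable_scaleR borel_measurable_indicator E_F w_F G_F)
  have weight: "AE \<omega> in M. ?ce E \<omega> * w \<omega> = ((?\<pi> u + ?\<pi> v) / ?\<pi> u) * pscore M X U u \<omega>"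
    using cond_exp_stratum_union_weight[OF P X_M _ uv] Ev_M pos_u pos_den
    unfolding w_def E_def Ev_def by blast
  have "(\<integral>\<omega>. indicator (A \<inter> E) \<omega> *\<^sub>R (w \<omega> *\<^sub>R G \<omega>) \<partial>M)
      = (\<integral>\<omega>. indicator A \<omega> *\<^sub>R (indicator E \<omega> *\<^sub>R (w \<omega> *\<^sub>R G \<omega>)) \<partial>M)"
    by (rule Bochner_Integration.integral_cong) (auto split: split_indicator)
  also have "\<dots> = measure M A *\<^sub>R (\<integral>\<omega>. indicator E \<omega> *\<^sub>R (w \<omega> *\<^sub>R G \<omega>) \<partial>M)"
    by (rule integral_indicator_indep_subalgebra[OF P sub A indep wG_F])
  also have "(\<integral>\<omega>. indicator E \<omega> *\<^sub>R (w \<omega> *\<^sub>R G \<omega>) \<partial>M) = (\<integral>\<omega>. ?ce E \<omega> *\<^sub>R (w \<omega> *\<^sub>R G \<omega>) \<partial>M)"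
    unfolding E_U
    by (rule integral_indicator_cond_indep[OF P X_M Y ci]) (use Ev_M E_U E_F F_M w_XY G_XY in auto)
  also have "\<dots> = (\<integral>\<omega>. ((?\<pi> u + ?\<pi> v) / ?\<pi> u) *\<^sub>R (pscore M X U u \<omega> *\<^sub>R G \<omega>) \<partial>M)"
  proof (rule integral_cong_AE)
    show "AE \<omega> in M. ?ce E \<omega> *\<^sub>R (w \<omega> *\<^sub>R G \<omega>)
        = ((?\<pi> u + ?\<pi> v) / ?\<pi> u) *\<^sub>R (pscore M X U u \<omega> *\<^sub>R G \<omega>)"
      using weight by eventually_elim simp
  qed (use w_M G_M in \<open>simp_all add: pscore_eq\<close>)
  also have "\<dots> = ((?\<pi> u + ?\<pi> v) / ?\<pi> u) *\<^sub>R (\<integral>\<omega>. pscore M X U u \<omega> *\<^sub>R G \<omega> \<partial>M)"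
    by (rule integral_scaleR_right)
  also have "(\<integral>\<omega>. pscore M X U u \<omega> *\<^sub>R G \<omega> \<partial>M) = (\<integral>\<omega>. indicator (Ev u) \<omega> *\<^sub>R G \<omega> \<partial>M)"
    using integral_indicator_cond_indep[OF P X_M Y ci _ G_XY, of "{u}"] Ev_M
    unfolding pscore_eq Ev_U by simp
  finally have integral_eq: "(\<integral>\<omega>. indicator (A \<inter> E) \<omega> *\<^sub>R (w \<omega> *\<^sub>R G \<omega>) \<partial>M)
      = (measure M A * ((?\<pi> u + ?\<pi> v) / ?\<pi> u)) *\<^sub>R (\<integral>\<omega>. indicator (Ev u) \<omega> *\<^sub>R G \<omega> \<partial>M)"
    by simp
  have measure_eq: "measure M (A \<inter> E) = measure M A * (?\<pi> u + ?\<pi> v)"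
    using indep[OF E_F] disjoint Ev_M unfolding E_def by (simp add: measure_Union)
  then show ?thesis
    using pos_A pos_u integral_eq unfolding cexp_event_def E_def[symmetric]
    by (simp add: field_simps)
qed

lemma subalgebra_vimage_algebra:
  assumes "W \<in> measurable M N"
  shows "subalgebra M (vimage_algebra (space M) W N)"
  using assms measurable_sets[OF assms] unfolding subalgebra_def
  by (auto simp: sets_vimage_algebra2 measurable_space)

lemma indep_rv_vimage_algebra:
  assumes indep: "indep_rv M Ma Z N W" and W: "W \<in> measurable M N"
    and Sa: "Sa \<in> sets Ma" and C: "C \<in> sets (vimage_algebra (space M) W N)"
  shows "measure M ({\<omega> \<in> space M. Z \<omega> \<in> Sa} \<inter> C)
    = measure M {\<omega> \<in> space M. Z \<omega> \<in> Sa} * measure M C"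
proof -
  obtain Sb where Sb: "Sb \<in> sets N" and C_eq: "C = W -` Sb \<inter> space M"
    using C by (auto simp: sets_vimage_algebra2 measurable_space[OF W])
  have "{\<omega> \<in> space M. Z \<omega> \<in> Sa} \<inter> C = {\<omega> \<in> space M. Z \<omega> \<in> Sa \<and> W \<omega> \<in> Sb}"
    and "C = {\<omega> \<in> space M. W \<omega> \<in> Sb}"
    using C_eq by auto
  then show ?thesis
    using indep Sa Sb unfolding indep_rv_def by simp
qed

lemma randomization_subalgebra:
  fixes Z S1 S0 :: "'a \<Rightarrow> bool" and Y1 Y0 :: "'a \<Rightarrow> real" and X :: "'a \<Rightarrow> 'x::topological_space"
  assumes [measurable]: "S1 \<in> measurable M (count_space UNIV)" "S0 \<in> measurable M (count_space UNIV)"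
      "Y1 \<in> borel_measurable M" "Y0 \<in> borel_measurable M" "X \<in> borel_measurable M"
    and randomization: "indep_rv M (count_space UNIV) Z
          (count_space UNIV \<Otimes>\<^sub>M count_space UNIV \<Otimes>\<^sub>M borel \<Otimes>\<^sub>M borel \<Otimes>\<^sub>M borel)
          (\<lambda>\<omega>. (S1 \<omega>, S0 \<omega>, Y1 \<omega>, Y0 \<omega>, X \<omega>))"
  obtains F where "subalgebra M F"
    and "S1 \<in> measurable F (count_space UNIV)" "S0 \<in> measurable F (count_space UNIV)"
    and "Y1 \<in> borel_measurable F" "Y0 \<in> borel_measurable F" "X \<in> borel_measurable F"
    and "\<And>z C. C \<in> sets F \<Longrightarrow> measure M ({\<omega> \<in> space M. Z \<omega> = z} \<inter> C)
           = measure M {\<omega> \<in> space M. Z \<omega> = z} * measure M C"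
proof -
  let ?N = "count_space UNIV \<Otimes>\<^sub>M count_space UNIV \<Otimes>\<^sub>M borel \<Otimes>\<^sub>M borel \<Otimes>\<^sub>M (borel :: 'x measure)"
  define W where "W = (\<lambda>\<omega>. (S1 \<omega>, S0 \<omega>, Y1 \<omega>, Y0 \<omega>, X \<omega>))"
  define F where "F = vimage_algebra (space M) W ?N"
  have W_M: "W \<in> measurable M ?N"
    unfolding W_def by measurable
  have W_F: "W \<in> measurable F ?N"
    unfolding F_def by (rule measurable_vimage_algebra1) (use W_M in \<open>auto dest: measurable_space\<close>)
  have "(\<lambda>\<omega>. fst (W \<omega>)) \<in> measurable F (count_space UNIV)"
    and "(\<lambda>\<omega>. fst (snd (W \<omega>))) \<in> measurable F (count_space UNIV)"
    and "(\<lambda>\<omega>. fst (snd (snd (W \<omega>)))) \<in> borel_measurable F"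
    and "(\<lambda>\<omega>. fst (snd (snd (snd (W \<omega>))))) \<in> borel_measurable F"
    and "(\<lambda>\<omega>. snd (snd (snd (snd (W \<omega>))))) \<in> borel_measurable F"
    using W_F by measurable
  moreover have "measure M ({\<omega> \<in> space M. Z \<omega> = z} \<inter> C) = measure M {\<omega> \<in> space M. Z \<omega> = z} * measure M C"
    if "C \<in> sets F" for z C
    using indep_rv_vimage_algebra[OF randomization[folded W_def] W_M _ that[unfolded F_def], of "{z}"]
    by simp
  ultimately show ?thesis
    using that subalgebra_vimage_algebra[OF W_M] unfolding F_def W_def by simp
qed

lemma borel_measurable_outer [measurable]: "outer \<in> borel_measurable borel"
  unfolding outer_def by (intro borel_measurable_continuous_onI continuous_intros)

lemma cexp_event_cong: "(\<And>\<omega>. \<omega> \<in> A \<Longrightarrow> f \<omega> = g \<omega>) \<Longrightarrow> cexp_event M f A = cexp_event M g A"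
  unfolding cexp_event_def by (metis indicator_simps(2) scaleR_zero_left)

theorem corollary4:
  fixes M :: "'a measure"
    and Z S1 S0 :: "'a \<Rightarrow> bool"
    and Y1 Y0 :: "'a \<Rightarrow> real"
    and X :: "'a \<Rightarrow> real ^ 'n"
  defines "U \<equiv> (\<lambda>\<omega>. (S1 \<omega>, S0 \<omega>))"
    and "S \<equiv> (\<lambda>\<omega>. if Z \<omega> then S1 \<omega> else S0 \<omega>)"
    and "Y \<equiv> (\<lambda>\<omega>. if Z \<omega> then Y1 \<omega> else Y0 \<omega>)"
  defines "Ev u \<equiv> {\<omega> \<in> space M. U \<omega> = u}"
  defines "e u \<equiv> pscore M X U u"
    and "\<pi> u \<equiv> measure M (Ev u)"
  defines "w1 \<equiv> (\<lambda>\<omega>. (e (True, False) \<omega> / (e (True, False) \<omega> + e (True, True) \<omega>))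
                     / (\<pi> (True, False) / (\<pi> (True, False) + \<pi> (True, True))))"
    and "w0 \<equiv> (\<lambda>\<omega>. (e (True, False) \<omega> / (e (True, False) \<omega> + e (False, False) \<omega>))
                     / (\<pi> (True, False) / (\<pi> (True, False) + \<pi> (False, False))))"
  defines "A11 \<equiv> {\<omega> \<in> space M. Z \<omega> \<and> S \<omega>}"
    and "A00 \<equiv> {\<omega> \<in> space M. \<not> Z \<omega> \<and> \<not> S \<omega>}"
  assumes prob: "prob_space M"
    and meas_Z: "Z \<in> measurable M (count_space UNIV)"
    and meas_S1: "S1 \<in> measurable M (count_space UNIV)"
    and meas_S0: "S0 \<in> measurable M (count_space UNIV)"
    and meas_Y1: "Y1 \<in> borel_measurable M"
    and meas_Y0: "Y0 \<in> borel_measurable M"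
    and meas_X: "X \<in> borel_measurable M"
    and randomization: "indep_rv M (count_space UNIV) Z
          (count_space UNIV \<Otimes>\<^sub>M count_space UNIV \<Otimes>\<^sub>M borel \<Otimes>\<^sub>M borel \<Otimes>\<^sub>M borel)
          (\<lambda>\<omega>. (S1 \<omega>, S0 \<omega>, Y1 \<omega>, Y0 \<omega>, X \<omega>))"
    and monotonicity: "AE \<omega> in M. S0 \<omega> \<longrightarrow> S1 \<omega>"
    and ignorability1: "cond_indep_given M Y1 U X"
    and ignorability0: "cond_indep_given M Y0 U X"
    and pos_ev: "\<pi> (True, False) > 0"
    and pos_A11: "measure M A11 > 0"
    and pos_A00: "measure M A00 > 0"
    and pos_den1: "AE \<omega> in M. e (True, False) \<omega> + e (True, True) \<omega> > 0"
    and pos_den0: "AE \<omega> in M. e (True, False) \<omega> + e (False, False) \<omega> > 0"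
    and int_XY1: "integrable M (\<lambda>\<omega>. Y1 \<omega> *\<^sub>R X \<omega>)"
    and int_XY0: "integrable M (\<lambda>\<omega>. Y0 \<omega> *\<^sub>R X \<omega>)"
    and int_XX: "integrable M (\<lambda>\<omega>. outer (X \<omega>))"
    and int_wXY1: "integrable M (\<lambda>\<omega>. indicator A11 \<omega> *\<^sub>R (w1 \<omega> * Y \<omega>) *\<^sub>R X \<omega>)"
    and int_wXY0: "integrable M (\<lambda>\<omega>. indicator A00 \<omega> *\<^sub>R (w0 \<omega> * Y \<omega>) *\<^sub>R X \<omega>)"
    and int_wXX1: "integrable M (\<lambda>\<omega>. indicator A11 \<omega> *\<^sub>R w1 \<omega> *\<^sub>R outer (X \<omega>))"
    and int_wXX0: "integrable M (\<lambda>\<omega>. indicator A00 \<omega> *\<^sub>R w0 \<omega> *\<^sub>R outer (X \<omega>))"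
  shows "cexp_event M (\<lambda>\<omega>. Y1 \<omega> *\<^sub>R X \<omega>) (Ev (True, False))
           = cexp_event M (\<lambda>\<omega>. (w1 \<omega> * Y \<omega>) *\<^sub>R X \<omega>) A11
       \<and> cexp_event M (\<lambda>\<omega>. Y0 \<omega> *\<^sub>R X \<omega>) (Ev (True, False))
           = cexp_event M (\<lambda>\<omega>. (w0 \<omega> * Y \<omega>) *\<^sub>R X \<omega>) A00
       \<and> cexp_event M (\<lambda>\<omega>. outer (X \<omega>)) (Ev (True, False))
           = cexp_event M (\<lambda>\<omega>. w1 \<omega> *\<^sub>R outer (X \<omega>)) A11
       \<and> cexp_event M (\<lambda>\<omega>. w1 \<omega> *\<^sub>R outer (X \<omega>)) A11
           = cexp_event M (\<lambda>\<omega>. w0 \<omega> *\<^sub>R outer (X \<omega>)) A00"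
proof -
  obtain F where sub: "subalgebra M F" and [measurable]: "S1 \<in> measurable F (count_space UNIV)"
      "S0 \<in> measurable F (count_space UNIV)" "Y1 \<in> borel_measurable F" "Y0 \<in> borel_measurable F"
      and X_F [measurable]: "X \<in> borel_measurable F"
    and indep: "\<And>z C. C \<in> sets F \<Longrightarrow> measure M ({\<omega> \<in> space M. Z \<omega> = z} \<inter> C)
           = measure M {\<omega> \<in> space M. Z \<omega> = z} * measure M C"
    using randomization_subalgebra[OF meas_S1 meas_S0 meas_Y1 meas_Y0 meas_X randomization] by blast
  note [measurable] = meas_Z meas_Y1 meas_Y0 measurable_sigmaXY_X measurable_sigmaXY_Y
  have Ev_F: "Ev u \<in> sets F" for u
  proof (cases u)
    case (Pair a b)
    have "{\<omega> \<in> space F. S1 \<omega> = a \<and> S0 \<omega> = b} \<in> sets F"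
      by measurable
    then show ?thesis
      using sub unfolding Ev_def U_def Pair subalgebra_def by simp
  qed
  have A11_eq: "A11 = {\<omega> \<in> space M. Z \<omega> = True} \<inter> (Ev (True, False) \<union> Ev (True, True))"
    and A00_eq: "A00 = {\<omega> \<in> space M. Z \<omega> = False} \<inter> (Ev (True, False) \<union> Ev (False, False))"
    unfolding A11_def A00_def Ev_def U_def S_def by auto
  have arm1: "cexp_event M G (Ev (True, False)) = cexp_event M (\<lambda>\<omega>. w1 \<omega> *\<^sub>R G \<omega>) A11"
    if "G \<in> borel_measurable F" "G \<in> borel_measurable (sigmaXY M X Y1)"
    for G :: "'a \<Rightarrow> 'v::{banach, second_countable_topology}"
    using that Ev_F pos_ev pos_A11 pos_den1 unfolding w1_def A11_eq e_def \<pi>_def Ev_def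
    by (intro cexp_event_principal_weighting[OF prob sub X_F meas_Y1 ignorability1])
       (auto intro: indep[where z=True, simplified])
  have arm0: "cexp_event M G (Ev (True, False)) = cexp_event M (\<lambda>\<omega>. w0 \<omega> *\<^sub>R G \<omega>) A00"
    if "G \<in> borel_measurable F" "G \<in> borel_measurable (sigmaXY M X Y0)"
    for G :: "'a \<Rightarrow> 'v::{banach, second_countable_topology}"
    using that Ev_F pos_ev pos_A00 pos_den0 unfolding w0_def A00_eq e_def \<pi>_def Ev_def
    by (intro cexp_event_principal_weighting[OF prob sub X_F meas_Y0 ignorability0])
       (auto intro: indep[where z=False, simplified])
  have "cexp_event M (\<lambda>\<omega>. (w1 \<omega> * Y \<omega>) *\<^sub>R X \<omega>) A11
      = cexp_event M (\<lambda>\<omega>. w1 \<omega> *\<^sub>R (Y1 \<omega> *\<^sub>R X \<omega>)) A11"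
    and "cexp_event M (\<lambda>\<omega>. (w0 \<omega> * Y \<omega>) *\<^sub>R X \<omega>) A00
      = cexp_event M (\<lambda>\<omega>. w0 \<omega> *\<^sub>R (Y0 \<omega> *\<^sub>R X \<omega>)) A00"
    by (auto intro: cexp_event_cong simp: A11_def A00_def Y_def)
  moreover have "cexp_event M (\<lambda>\<omega>. Y1 \<omega> *\<^sub>R X \<omega>) (Ev (True, False))
      = cexp_event M (\<lambda>\<omega>. w1 \<omega> *\<^sub>R (Y1 \<omega> *\<^sub>R X \<omega>)) A11"
    and "cexp_event M (\<lambda>\<omega>. Y0 \<omega> *\<^sub>R X \<omega>) (Ev (True, False))
      = cexp_event M (\<lambda>\<omega>. w0 \<omega> *\<^sub>R (Y0 \<omega> *\<^sub>R X \<omega>)) A00"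
    and "cexp_event M (\<lambda>\<omega>. outer (X \<omega>)) (Ev (True, False))
      = cexp_event M (\<lambda>\<omega>. w1 \<omega> *\<^sub>R outer (X \<omega>)) A11"
    and "cexp_event M (\<lambda>\<omega>. outer (X \<omega>)) (Ev (True, False))
      = cexp_event M (\<lambda>\<omega>. w0 \<omega> *\<^sub>R outer (X \<omega>)) A00"
    by (intro arm1 arm0; measurable)+
  ultimately show ?thesis
    by simp
qed

end
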